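(* Let $F$ be an Archimedean vector lattice and $(f_{\alpha})_{\alpha\in A}\subset F_{+}$ a net. The following are equivalent: (i) $f_{\alpha}\xrightarrow{uo}0_{F}$; (ii) if $h\in F_{+}$ is such that $\bigvee_{\alpha\ge\alpha_{0}}h\wedge f_{\alpha}=h$ for every $\alpha_{0}\in A$, then $h=0_{F}$; (iii) for every $h>0_{F}$ there are $e\in(0_{F},h]$ and $\alpha_{0}$ such that $(f_{\alpha}-h)^{+}\perp e$ for every $\alpha\ge\alpha_{0}$. Moreover, if $F$ has the principal projection property, these conditions are equivalent to: (iv) for every $h>0_{F}$ there are a nonzero component $e$ of $h$ and $\alpha_{0}$ such that $P_{e}f_{\alpha}\le e$ for every $\alpha\ge\alpha_{0}$.
   Context: A net order converges to $f$ if there is $G$ with $\bigwedge G=0$ such that for each $g\in G$ the net is eventually in $[f-g,f+g]$; it uo-converges to $f$ if $|f_\alpha-f|\wedge g$ order converges to $0$ for every $g\ge0$. $x\perp y$ means $|x|\wedge|y|=0$. $F$ has the principal projection property (PPP) if for every $e\in F$ the band $\{e\}^{dd}$ is a projection band, i.e. $F=\{e\}^{dd}+\{e\}^{d}$; $P_e$ denotes the corresponding band projection onto $\{e\}^{dd}$. An element $e$ is a component of $h$ if $e\perp h-e$. *)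

theory Defs
  imports Complex_Main "HOL-Library.Lattice_Algebras"
begin

text \<open>A (real) vector lattice: an ordered real vector space whose order is a lattice.
  Absolute value is |x| = x \<squnion> -x; the positive part is pprt x = x \<squnion> 0.\<close>
class vector_lattice = ordered_real_vector + lattice_ab_group_add_abs

definition archimedean_vl :: "'a::vector_lattice itself \<Rightarrow> bool" where
  "archimedean_vl _ \<longleftrightarrow>
     (\<forall>x y :: 'a. 0 \<le> x \<and> (\<forall>n::nat. real n *\<^sub>R x \<le> y) \<longrightarrow> x = 0)"

definition directed_index :: "'i::preorder itself \<Rightarrow> bool" where
  "directed_index _ \<longleftrightarrow> (\<forall>a b :: 'i. \<exists>c. a \<le> c \<and> b \<le> c)"

definition is_inf_of :: "'a::order \<Rightarrow> 'a set \<Rightarrow> bool" where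
  "is_inf_of x S \<longleftrightarrow> (\<forall>s\<in>S. x \<le> s) \<and> (\<forall>y. (\<forall>s\<in>S. y \<le> s) \<longrightarrow> y \<le> x)"

definition is_sup_of :: "'a::order \<Rightarrow> 'a set \<Rightarrow> bool" where
  "is_sup_of x S \<longleftrightarrow> (\<forall>s\<in>S. s \<le> x) \<and> (\<forall>y. (\<forall>s\<in>S. s \<le> y) \<longrightarrow> x \<le> y)"

definition order_conv :: "('i::preorder \<Rightarrow> 'a::vector_lattice) \<Rightarrow> 'a \<Rightarrow> bool" where
  "order_conv f x \<longleftrightarrow> (\<exists>G. is_inf_of 0 G \<and>
      (\<forall>g\<in>G. \<exists>a0. \<forall>a. a0 \<le> a \<longrightarrow> x - g \<le> f a \<and> f a \<le> x + g))"

definition uo_conv :: "('i::preorder \<Rightarrow> 'a::vector_lattice) \<Rightarrow> 'a \<Rightarrow> bool" where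
  "uo_conv f x \<longleftrightarrow> (\<forall>g. 0 \<le> g \<longrightarrow> order_conv (\<lambda>a. inf \<bar>f a - x\<bar> g) 0)"

definition disj :: "'a::vector_lattice \<Rightarrow> 'a \<Rightarrow> bool" (infix "\<bottom>\<^sub>v" 50) where
  "x \<bottom>\<^sub>v y \<longleftrightarrow> inf \<bar>x\<bar> \<bar>y\<bar> = 0"

definition disj_compl :: "'a::vector_lattice set \<Rightarrow> 'a set" where
  "disj_compl S = {x. \<forall>s\<in>S. x \<bottom>\<^sub>v s}"

definition PPP :: "'a::vector_lattice itself \<Rightarrow> bool" where
  "PPP _ \<longleftrightarrow> (\<forall>e x :: 'a. \<exists>y z. y \<in> disj_compl (disj_compl {e}) \<and>
                                z \<in> disj_compl {e} \<and> x = y + z)"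

text \<open>Band projection onto {e}^dd (well defined under PPP, since the sum is direct).\<close>
definition band_proj :: "'a::vector_lattice \<Rightarrow> 'a \<Rightarrow> 'a" where
  "band_proj e x = (THE y. y \<in> disj_compl (disj_compl {e}) \<and> x - y \<in> disj_compl {e})"

definition component_of :: "'a::vector_lattice \<Rightarrow> 'a \<Rightarrow> bool" where
  "component_of e h \<longleftrightarrow> e \<bottom>\<^sub>v (h - e)"

end

theory Submission
  imports Defs
begin

text \<open>For a positive net, uo-convergence to 0 means that for every \<open>u \<ge> 0\<close> the eventual
  upper bounds of \<open>f\<^sub>\<alpha> \<and> u\<close> have infimum 0. If \<open>h \<and> f\<^sub>\<alpha>\<close> fills out \<open>h\<close> along every tail,
  then \<open>h\<close> lies below every eventual bound of \<open>f\<^sub>\<alpha> \<and> h\<close>, which gives (i) \<open>\<Rightarrow>\<close> (ii).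
  Conversely, a positive lower bound \<open>h\<close> of the eventual bounds of \<open>f\<^sub>\<alpha> \<and> u\<close> is the supremum
  of every tail of \<open>h \<and> f\<^sub>\<alpha>\<close>: if \<open>w\<close> bounds a tail, every eventual bound can be lowered by
  \<open>d = h - w \<and> h\<close>, so \<open>n d \<le> u\<close> for all \<open>n\<close>, and the Archimedean property forces \<open>d = 0\<close>.
  An eventual bound \<open>v\<close> of \<open>f\<^sub>\<alpha> \<and> h\<close> not above \<open>h\<close> yields \<open>e = (h - v)\<^sup>+\<close>, on which
  \<open>f\<^sub>\<alpha>\<close> eventually stays below \<open>h\<close>; conversely such an \<open>e\<close> for \<open>h/2\<close> keeps every tail of
  \<open>h \<and> f\<^sub>\<alpha>\<close> below \<open>h - e\<close>. Under the PPP, projecting \<open>h\<close> onto \<open>{e}\<^sup>d\<^sup>d\<close> gives a nonzero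
  component \<open>y\<close> of \<open>h\<close>, and for a component \<open>y\<close> of \<open>h\<close> one has \<open>P\<^sub>y x \<le> y\<close> iff
  \<open>(x - h)\<^sup>+ \<bottom> y\<close>.\<close>

lemma inf_add_le_add_inf:
  fixes u v w :: "'a::lattice_ab_group_add"
  assumes "0 \<le> u" "0 \<le> v" "0 \<le> w"
  shows "inf u (v + w) \<le> inf u v + inf u w"
proof -
  have "inf u (v + w) \<le> inf (inf (u + u) (u + w)) (inf (v + u) (v + w))"
  proof -
    have "u \<le> u + u" "u \<le> u + w" "u \<le> v + u" using assms by simp_all
    moreover have "inf u (v + w) \<le> u" "inf u (v + w) \<le> v + w" by simp_all
    ultimately show ?thesis by (meson le_inf_iff order_trans)
  qed
  also have "\<dots> = inf u v + inf u w"
    by (simp add: add_inf_distrib_left add_inf_distrib_right inf_assoc inf_commute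
        inf_left_commute add.commute)
  finally show ?thesis .
qed

lemma inf_add_nonneg_le:
  fixes x y c :: "'a::lattice_ab_group_add"
  assumes "0 \<le> c"
  shows "inf x (y + c) \<le> inf x y + c"
proof -
  have "inf x (y + c) \<le> inf (x + c) (y + c)"
    using assms by (intro inf_mono) (simp_all add: add_increasing2)
  then show ?thesis by (simp add: add_inf_distrib_right)
qed

lemma add_le_if_inf_eq_0:
  fixes x y z :: "'a::lattice_ab_group_add"
  assumes "inf x y = 0" "x \<le> z" "y \<le> z"
  shows "x + y \<le> z"
  using add_eq_inf_sup[of x y] assms by simp

lemma inf_eq_diff_pprt:
  fixes x h :: "'a::lattice_ab_group_add"
  shows "inf x h = h - pprt (h - x)"
  by (simp add: pprt_def diff_sup_eq_inf add_inf_distrib_left inf_commute)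

lemma disj_sym: "x \<bottom>\<^sub>v y \<longleftrightarrow> y \<bottom>\<^sub>v x"
  by (simp add: disj_def inf_commute)

lemma disj_nonneg_iff:
  fixes x y :: "'a::vector_lattice"
  assumes "0 \<le> x" "0 \<le> y"
  shows "x \<bottom>\<^sub>v y \<longleftrightarrow> inf x y = 0"
  using assms by (simp add: disj_def abs_of_nonneg)

lemma disj_self_iff: "x \<bottom>\<^sub>v x \<longleftrightarrow> x = 0"
  by (simp add: disj_def)

lemma disj_if_abs_le:
  fixes x y z :: "'a::vector_lattice"
  assumes "\<bar>x\<bar> \<le> \<bar>y\<bar>" "y \<bottom>\<^sub>v z"
  shows "x \<bottom>\<^sub>v z"
proof -
  have "inf \<bar>x\<bar> \<bar>z\<bar> \<le> inf \<bar>y\<bar> \<bar>z\<bar>" using assms(1) by (rule inf_mono) simp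
  with assms(2) show ?thesis by (simp add: disj_def antisym)
qed

lemma disj_diff:
  fixes x y z :: "'a::vector_lattice"
  assumes "x \<bottom>\<^sub>v z" "y \<bottom>\<^sub>v z"
  shows "(x - y) \<bottom>\<^sub>v z"
proof -
  have "inf \<bar>x - y\<bar> \<bar>z\<bar> \<le> inf \<bar>z\<bar> (\<bar>x\<bar> + \<bar>y\<bar>)"
    by (subst inf_commute) (rule inf_mono, simp_all add: abs_triangle_ineq4)
  also have "\<dots> \<le> inf \<bar>z\<bar> \<bar>x\<bar> + inf \<bar>z\<bar> \<bar>y\<bar>" by (rule inf_add_le_add_inf) simp_all
  also have "\<dots> = 0" using assms by (simp add: disj_def inf_commute)
  finally show ?thesis by (simp add: disj_def antisym)
qed

lemma disj_pprt_pprt_uminus: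
  fixes x :: "'a::vector_lattice"
  shows "pprt x \<bottom>\<^sub>v pprt (- x)"
proof -
  have "sup (pprt x) (pprt (- x)) = sup 0 (sup x (- x))"
    by (simp add: pprt_def sup_assoc sup_commute sup_left_commute)
  also have "\<dots> = \<bar>x\<bar>" using abs_ge_zero[of x] by (simp add: abs_lattice sup_absorb2)
  finally have "sup (pprt x) (pprt (- x)) = \<bar>x\<bar>" .
  moreover have "pprt x + pprt (- x) = \<bar>x\<bar>" by (simp add: abs_prts pprt_neg)
  ultimately have "inf (pprt x) (pprt (- x)) = 0" using add_eq_inf_sup[of "pprt x" "pprt (- x)"] by simp
  then show ?thesis by (simp add: disj_nonneg_iff)
qed

lemma pprt_le_abs:
  fixes x :: "'a::lattice_ab_group_add_abs"
  shows "pprt x \<le> \<bar>x\<bar>"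
  unfolding pprt_def by (simp add: abs_ge_self)

lemma le_disj_imp_nonpos:
  fixes x y :: "'a::vector_lattice"
  assumes "x \<le> y" "x \<bottom>\<^sub>v y"
  shows "x \<le> 0"
proof -
  have "pprt x \<le> inf \<bar>x\<bar> \<bar>y\<bar>"
    using pprt_le_abs[of x] order_trans[OF pprt_mono[OF assms(1)] pprt_le_abs[of y]] by simp
  with assms(2) have "pprt x = 0" by (simp add: disj_def antisym)
  then show ?thesis by (simp add: le_zero_iff_zero_pprt)
qed

lemma component_of_complement: "component_of e h \<Longrightarrow> component_of (h - e) h"
  by (simp add: component_of_def disj_sym)

lemma component_of_nonneg:
  fixes e h :: "'a::vector_lattice"
  assumes "0 \<le> h" "component_of e h"
  shows "0 \<le> e"
proof -
  define n where "n = pprt (- e)"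
  have "n \<le> h + n" using assms(1) by simp
  also have "h + n = (h - e) + pprt e" using prts[of e] by (simp add: n_def pprt_neg algebra_simps)
  also have "\<dots> \<le> \<bar>h - e\<bar> + pprt e" by (rule add_right_mono[OF abs_ge_self])
  finally have "n = inf n (\<bar>h - e\<bar> + pprt e)" by (simp add: inf_absorb1)
  also have "\<dots> \<le> inf n \<bar>h - e\<bar> + inf n (pprt e)" by (rule inf_add_le_add_inf) (simp_all add: n_def)
  also have "inf n (pprt e) = 0"
    using disj_pprt_pprt_uminus[of e] by (simp add: n_def disj_nonneg_iff inf_commute)
  also have "inf n \<bar>h - e\<bar> \<le> inf \<bar>e\<bar> \<bar>h - e\<bar>" by (rule inf_mono) (simp_all add: n_def abs_prts pprt_neg)
  also have "inf \<bar>e\<bar> \<bar>h - e\<bar> = 0" using assms(2) by (simp add: component_of_def disj_def)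
  finally have "pprt (- e) = 0" by (simp add: n_def antisym)
  then show ?thesis by (simp add: le_zero_iff_zero_pprt[symmetric])
qed

lemma component_of_le:
  fixes e h :: "'a::vector_lattice"
  assumes "0 \<le> h" "component_of e h"
  shows "e \<le> h"
  using component_of_nonneg[OF assms(1) component_of_complement[OF assms(2)]] by simp

lemma mem_disj_compl_singleton: "x \<in> disj_compl {e} \<longleftrightarrow> x \<bottom>\<^sub>v e"
  by (simp add: disj_compl_def)

lemma mem_disj_compl_disj_compl_singleton:
  "x \<in> disj_compl (disj_compl {e}) \<longleftrightarrow> (\<forall>s. s \<bottom>\<^sub>v e \<longrightarrow> x \<bottom>\<^sub>v s)"
  by (auto simp: disj_compl_def)

lemma disj_compl_diff:
  assumes "x \<in> disj_compl S" "y \<in> disj_compl S"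
  shows "x - y \<in> disj_compl S"
  using assms by (simp add: disj_compl_def disj_diff)

lemma disj_compl_Int_disj_compl:
  assumes "x \<in> disj_compl (disj_compl S)" "x \<in> disj_compl S"
  shows "x = 0"
proof -
  have "x \<bottom>\<^sub>v x" using assms unfolding disj_compl_def by blast
  then show ?thesis by (simp add: disj_self_iff)
qed

lemma band_proj_decomp:
  fixes e x :: "'a::vector_lattice"
  assumes "PPP TYPE('a)"
  shows "band_proj e x \<in> disj_compl (disj_compl {e}) \<and> x - band_proj e x \<in> disj_compl {e}"
proof -
  let ?P = "\<lambda>y. y \<in> disj_compl (disj_compl {e}) \<and> x - y \<in> disj_compl {e}"
  obtain y z where "y \<in> disj_compl (disj_compl {e})" "z \<in> disj_compl {e}" "x = y + z"
    using assms unfolding PPP_def by blast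
  then have y: "?P y" by simp
  have "y' = y" if y': "?P y'" for y'
  proof -
    have "y' - y \<in> disj_compl (disj_compl {e})" using y y' by (simp add: disj_compl_diff)
    moreover have "y' - y \<in> disj_compl {e}"
      using disj_compl_diff[of "x - y" "{e}" "x - y'"] y y' by simp
    ultimately have "y' - y = 0" by (rule disj_compl_Int_disj_compl)
    then show ?thesis by simp
  qed
  with y show ?thesis unfolding band_proj_def by (rule theI)
qed

lemma component_of_band_proj:
  fixes e h :: "'a::vector_lattice"
  assumes "PPP TYPE('a)"
  shows "component_of (band_proj e h) h"
  using band_proj_decomp[OF assms, of e h]
  by (simp add: component_of_def mem_disj_compl_disj_compl_singleton mem_disj_compl_singleton)

lemma band_proj_ne_zero:
  fixes e h :: "'a::vector_lattice"
  assumes "PPP TYPE('a)" "0 < e" "e \<le> h"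
  shows "band_proj e h \<noteq> 0"
proof
  assume "band_proj e h = 0"
  then have "h \<bottom>\<^sub>v e" using band_proj_decomp[OF assms(1), of e h] by (simp add: mem_disj_compl_singleton)
  with assms(2,3) have "e = 0" by (simp add: disj_nonneg_iff inf_absorb2)
  with assms(2) show False by simp
qed

lemma band_proj_le_component_iff:
  fixes x y h :: "'a::vector_lattice"
  assumes ppp: "PPP TYPE('a)" and comp: "component_of y h"
  shows "band_proj y x \<le> y \<longleftrightarrow> pprt (x - h) \<bottom>\<^sub>v y"
proof -
  define b where "b = band_proj y x - y"
  define d where "d = (x - band_proj y x) - (h - y)"
  have x_h: "x - h = b + d" by (simp add: b_def d_def)
  have "y \<in> disj_compl (disj_compl {y})" by (simp add: mem_disj_compl_disj_compl_singleton disj_sym)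
  then have b: "b \<in> disj_compl (disj_compl {y})"
    unfolding b_def using band_proj_decomp[OF ppp] by (simp add: disj_compl_diff)
  have "(h - y) \<bottom>\<^sub>v y" using comp by (simp add: component_of_def disj_sym)
  then have d: "d \<bottom>\<^sub>v y"
    unfolding d_def using band_proj_decomp[OF ppp] by (simp add: disj_diff mem_disj_compl_singleton)
  show ?thesis
  proof
    assume "band_proj y x \<le> y"
    then have "x - h \<le> d" by (simp add: x_h b_def)
    then have "\<bar>pprt (x - h)\<bar> \<le> \<bar>d\<bar>"
      using pprt_le_abs[of d] by (simp add: abs_of_nonneg order_trans[OF pprt_mono])
    then show "pprt (x - h) \<bottom>\<^sub>v y" using d by (rule disj_if_abs_le)
  next
    assume "pprt (x - h) \<bottom>\<^sub>v y"
    then have "(pprt (x - h) - d) \<bottom>\<^sub>v y" using d by (rule disj_diff)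
    then have "b \<bottom>\<^sub>v (pprt (x - h) - d)" using b by (simp add: mem_disj_compl_disj_compl_singleton)
    moreover have "b \<le> pprt (x - h) - d" using x_h by (simp add: pprt_def le_diff_eq)
    ultimately have "b \<le> 0" by (simp add: le_disj_imp_nonpos disj_sym)
    then show "band_proj y x \<le> y" by (simp add: b_def)
  qed
qed

definition tail_bounds :: "('i::preorder \<Rightarrow> 'a::order) \<Rightarrow> 'a set" where
  "tail_bounds f = {v. \<exists>a0. \<forall>a. a0 \<le> a \<longrightarrow> f a \<le> v}"

lemma tail_bounds_nonneg:
  fixes f :: "'i::preorder \<Rightarrow> 'a::{order, zero}"
  assumes "\<And>a. 0 \<le> f a" "v \<in> tail_bounds f"
  shows "0 \<le> v"
proof -
  from assms(2) obtain a0 where "\<forall>a. a0 \<le> a \<longrightarrow> f a \<le> v" unfolding tail_bounds_def by blast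
  then have "f a0 \<le> v" by simp
  with assms(1) show ?thesis by (rule order_trans)
qed

lemma order_conv_zero_iff_tail_bounds:
  fixes g :: "'i::preorder \<Rightarrow> 'a::vector_lattice"
  assumes pos: "\<And>a. 0 \<le> g a"
  shows "order_conv g 0 \<longleftrightarrow> is_inf_of 0 (tail_bounds g)"
proof
  assume "order_conv g 0"
  then obtain G where G: "is_inf_of 0 G"
    and "\<forall>v\<in>G. \<exists>a0. \<forall>a. a0 \<le> a \<longrightarrow> 0 - v \<le> g a \<and> g a \<le> 0 + v"
    unfolding order_conv_def by blast
  then have G_T: "G \<subseteq> tail_bounds g" by (force simp: tail_bounds_def)
  show "is_inf_of 0 (tail_bounds g)"
    unfolding is_inf_of_def
  proof (intro conjI allI impI ballI)
    fix v assume "v \<in> tail_bounds g"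
    then show "0 \<le> v" by (rule tail_bounds_nonneg[OF pos])
  next
    fix y assume "\<forall>v\<in>tail_bounds g. y \<le> v"
    with G_T have "\<forall>v\<in>G. y \<le> v" by blast
    with G show "y \<le> 0" unfolding is_inf_of_def by blast
  qed
next
  assume T: "is_inf_of 0 (tail_bounds g)"
  have lower: "- v \<le> g a" if "v \<in> tail_bounds g" for v a
  proof -
    have "- v \<le> 0" using tail_bounds_nonneg[OF pos that] by simp
    then show ?thesis using pos[of a] by (rule order_trans)
  qed
  have "\<exists>a0. \<forall>a. a0 \<le> a \<longrightarrow> 0 - v \<le> g a \<and> g a \<le> 0 + v" if "v \<in> tail_bounds g" for v
    using that lower[OF that] unfolding tail_bounds_def by auto
  with T show "order_conv g 0" unfolding order_conv_def by blast
qed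

lemma uo_conv_zero_iff_tail_bounds:
  fixes f :: "'i::preorder \<Rightarrow> 'a::vector_lattice"
  assumes "\<And>a. 0 \<le> f a"
  shows "uo_conv f 0 \<longleftrightarrow> (\<forall>u. 0 \<le> u \<longrightarrow> is_inf_of 0 (tail_bounds (\<lambda>a. inf (f a) u)))"
proof -
  have "uo_conv f 0 \<longleftrightarrow> (\<forall>u. 0 \<le> u \<longrightarrow> order_conv (\<lambda>a. inf (f a) u) 0)"
    using assms by (simp add: uo_conv_def abs_of_nonneg)
  also have "\<dots> \<longleftrightarrow> (\<forall>u. 0 \<le> u \<longrightarrow> is_inf_of 0 (tail_bounds (\<lambda>a. inf (f a) u)))"
    using assms by (simp add: order_conv_zero_iff_tail_bounds)
  finally show ?thesis .
qed

lemma uo_conv_zero_imp_tail_sup_zero: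
  fixes f :: "'i::preorder \<Rightarrow> 'a::vector_lattice"
  assumes pos: "\<And>a. 0 \<le> f a" and uo: "uo_conv f 0"
    and "0 \<le> h" and sup: "\<And>a0. is_sup_of h {inf h (f a) | a. a0 \<le> a}"
  shows "h = 0"
proof -
  have "h \<le> v" if "v \<in> tail_bounds (\<lambda>a. inf (f a) h)" for v
  proof -
    from that obtain a0 where "\<forall>a. a0 \<le> a \<longrightarrow> inf (f a) h \<le> v" unfolding tail_bounds_def by blast
    then have "\<forall>s\<in>{inf h (f a) | a. a0 \<le> a}. s \<le> v" by (auto simp: inf_commute)
    with sup[of a0] show ?thesis unfolding is_sup_of_def by blast
  qed
  moreover have "is_inf_of 0 (tail_bounds (\<lambda>a. inf (f a) h))"
    using uo \<open>0 \<le> h\<close> by (simp add: uo_conv_zero_iff_tail_bounds[where f = f, OF pos])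
  ultimately have "h \<le> 0" unfolding is_inf_of_def by blast
  with \<open>0 \<le> h\<close> show ?thesis by simp
qed

lemma tail_bounds_lower:
  fixes f :: "'i::preorder \<Rightarrow> 'a::vector_lattice"
  assumes dir: "directed_index TYPE('i)"
    and v: "v \<in> tail_bounds (\<lambda>a. inf (f a) u)" and "h \<le> v"
    and tail_w: "\<forall>a. a0 \<le> a \<longrightarrow> inf (f a) h \<le> w"
  shows "v - (h - inf w h) \<in> tail_bounds (\<lambda>a. inf (f a) u)"
proof -
  obtain a1 where a1: "\<forall>a. a1 \<le> a \<longrightarrow> inf (f a) u \<le> v" using v unfolding tail_bounds_def by blast
  obtain a2 where "a0 \<le> a2" "a1 \<le> a2" using dir unfolding directed_index_def by blast
  have "inf (f a) u \<le> v - (h - inf w h)" if "a2 \<le> a" for a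
  proof -
    have a: "a0 \<le> a" "a1 \<le> a" using \<open>a0 \<le> a2\<close> \<open>a1 \<le> a2\<close> that by (meson order_trans)+
    have "inf (f a) u \<le> inf (f a) (h + (v - h))" using a1 a(2) by (simp add: le_infI1)
    also have "\<dots> \<le> inf (f a) h + (v - h)" using inf_add_nonneg_le[of "v - h" "f a" h] \<open>h \<le> v\<close> by simp
    also have "\<dots> \<le> inf w h + (v - h)" using tail_w a(1) by (intro add_right_mono) simp
    also have "\<dots> = v - (h - inf w h)" by (simp add: diff_diff_eq2 diff_add_eq add.commute)
    finally show ?thesis .
  qed
  then show ?thesis unfolding tail_bounds_def by blast
qed

lemma is_sup_of_tails_if_le_tail_bounds:
  fixes f :: "'i::preorder \<Rightarrow> 'a::vector_lattice"
  assumes arch: "archimedean_vl TYPE('a)" and dir: "directed_index TYPE('i)"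
    and "0 \<le> h" and below: "\<And>v. v \<in> tail_bounds (\<lambda>a. inf (f a) u) \<Longrightarrow> h \<le> v"
  shows "is_sup_of h {inf h (f a) | a. a0 \<le> a}"
  unfolding is_sup_of_def
proof (intro conjI allI impI ballI)
  fix s assume "s \<in> {inf h (f a) | a. a0 \<le> a}"
  then show "s \<le> h" by auto
next
  fix w assume "\<forall>s\<in>{inf h (f a) | a. a0 \<le> a}. s \<le> w"
  then have tail_w: "\<forall>a. a0 \<le> a \<longrightarrow> inf (f a) h \<le> w" by (auto simp: inf_commute)
  define d where "d = h - inf w h"
  have lower: "v - d \<in> tail_bounds (\<lambda>a. inf (f a) u)" if "v \<in> tail_bounds (\<lambda>a. inf (f a) u)" for v
    unfolding d_def using dir that below[OF that] tail_w by (rule tail_bounds_lower)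
  have bounds: "u - real n *\<^sub>R d \<in> tail_bounds (\<lambda>a. inf (f a) u)" for n
  proof (induction n)
    case 0
    then show ?case by (simp add: tail_bounds_def)
  next
    case (Suc n)
    from lower[OF this] show ?case by (simp add: algebra_simps)
  qed
  have "h + real n *\<^sub>R d \<le> u" for n using below[OF bounds] by (simp add: le_diff_eq)
  then have "real n *\<^sub>R d \<le> u" for n
    using add_increasing[OF \<open>0 \<le> h\<close> order_refl] by (rule order_trans[rotated])
  moreover have "0 \<le> d" unfolding d_def diff_ge_0_iff_ge by (rule inf.cobounded2)
  ultimately have "d = 0" using arch unfolding archimedean_vl_def by blast
  then have "inf w h = h" unfolding d_def right_minus_eq by (rule sym)
  then show "h \<le> w" using inf.cobounded1[of w h] by simp
qed

lemma tail_sup_zero_imp_uo_conv_zero: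
  fixes f :: "'i::preorder \<Rightarrow> 'a::vector_lattice"
  assumes arch: "archimedean_vl TYPE('a)" and dir: "directed_index TYPE('i)"
    and pos: "\<And>a. 0 \<le> f a"
    and tail_sup: "\<And>h. 0 \<le> h \<Longrightarrow> (\<And>a0. is_sup_of h {inf h (f a) | a. a0 \<le> a}) \<Longrightarrow> h = 0"
  shows "uo_conv f 0"
  unfolding uo_conv_zero_iff_tail_bounds[where f = f, OF pos]
proof (intro allI impI)
  fix u :: 'a
  let ?T = "tail_bounds (\<lambda>a. inf (f a) u)"
  assume "0 \<le> u"
  then have T: "0 \<le> v" if "v \<in> ?T" for v
    using tail_bounds_nonneg[of "\<lambda>a. inf (f a) u" v] that pos by simp
  show "is_inf_of 0 ?T"
    unfolding is_inf_of_def
  proof (intro conjI allI impI)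
    fix y assume "\<forall>v\<in>?T. y \<le> v"
    with T have "sup y 0 = 0"
      by (intro tail_sup is_sup_of_tails_if_le_tail_bounds[where u = u, OF arch dir]) simp_all
    then show "y \<le> 0" using sup.cobounded1[of y 0] by simp
  qed (use T in blast)
qed

lemma uo_conv_zero_imp_eventually_disj:
  fixes f :: "'i::preorder \<Rightarrow> 'a::vector_lattice"
  assumes pos: "\<And>a. 0 \<le> f a" and uo: "uo_conv f 0" and "0 < h"
  shows "\<exists>e a0. 0 < e \<and> e \<le> h \<and> (\<forall>a. a0 \<le> a \<longrightarrow> pprt (f a - h) \<bottom>\<^sub>v e)"
proof -
  have inf0: "is_inf_of 0 (tail_bounds (\<lambda>a. inf (f a) h))"
    using uo \<open>0 < h\<close> by (simp add: uo_conv_zero_iff_tail_bounds[where f = f, OF pos])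
  then obtain v where "v \<in> tail_bounds (\<lambda>a. inf (f a) h)" and "\<not> h \<le> v"
    using \<open>0 < h\<close> unfolding is_inf_of_def by (meson leD)
  then obtain a0 where a0: "\<forall>a. a0 \<le> a \<longrightarrow> inf (f a) h \<le> v" and "0 \<le> v"
    using inf0 unfolding tail_bounds_def is_inf_of_def by blast
  define e where "e = pprt (h - v)"
  have "0 < e" using \<open>\<not> h \<le> v\<close> by (simp add: e_def order_less_le le_zero_iff_zero_pprt[symmetric])
  moreover have "e \<le> h" using \<open>0 \<le> v\<close> \<open>0 < h\<close> by (simp add: e_def pprt_def)
  moreover have "pprt (f a - h) \<bottom>\<^sub>v e" if "a0 \<le> a" for a
  proof -
    have "h - pprt (h - f a) \<le> v" using a0 that by (simp add: inf_eq_diff_pprt[symmetric])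
    then have "h - v \<le> pprt (h - f a)" by (simp add: diff_le_eq add.commute)
    then have "e \<le> pprt (pprt (h - f a))" unfolding e_def by (rule pprt_mono)
    then have "e \<le> pprt (h - f a)" by simp
    then have "\<bar>e\<bar> \<le> \<bar>pprt (- (f a - h))\<bar>" using \<open>0 < e\<close> by (simp add: abs_of_nonneg)
    moreover have "pprt (- (f a - h)) \<bottom>\<^sub>v pprt (f a - h)" using disj_pprt_pprt_uminus disj_sym by blast
    ultimately have "e \<bottom>\<^sub>v pprt (f a - h)" by (rule disj_if_abs_le)
    then show ?thesis by (simp add: disj_sym)
  qed
  ultimately show ?thesis by blast
qed

lemma eventually_disj_imp_tail_sup_zero:
  fixes f :: "'i::preorder \<Rightarrow> 'a::vector_lattice"
  assumes eventually_disj: "\<And>k. 0 < k \<Longrightarrow> \<exists>e a0. 0 < e \<and> e \<le> k \<and> (\<forall>a. a0 \<le> a \<longrightarrow> pprt (f a - k) \<bottom>\<^sub>v e)"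
    and "0 \<le> h" and sup: "\<And>a0. is_sup_of h {inf h (f a) | a. a0 \<le> a}"
  shows "h = 0"
proof (rule ccontr)
  assume "h \<noteq> 0"
  define k where "k = (1/2::real) *\<^sub>R h"
  have h_eq: "h = k + k" by (simp add: k_def scaleR_add_left[symmetric])
  have "0 < k" using \<open>0 \<le> h\<close> \<open>h \<noteq> 0\<close> h_eq by (simp add: order_less_le)
  then obtain e a0 where "0 < e" "e \<le> k" and e_disj: "\<forall>a. a0 \<le> a \<longrightarrow> pprt (f a - k) \<bottom>\<^sub>v e"
    using eventually_disj by blast
  have "inf h (f a) \<le> h - e" if "a0 \<le> a" for a
  proof -
    define g where "g = pprt (f a - k)"
    have "inf g e = 0" using e_disj that \<open>0 < e\<close> by (simp add: g_def disj_nonneg_iff)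
    moreover have "0 \<le> inf (inf k g) e" using \<open>0 < k\<close> \<open>0 < e\<close> by (simp add: g_def less_imp_le)
    moreover have "inf (inf k g) e \<le> inf g e" by (rule inf_mono) simp_all
    ultimately have "inf (inf k g) e = 0" by (simp add: antisym)
    then have ke: "inf k g + e \<le> k" using \<open>e \<le> k\<close> by (simp add: add_le_if_inf_eq_0)
    have "f a - k \<le> g" by (simp add: g_def pprt_def)
    then have "inf h (f a) \<le> inf (k + k) (k + g)" by (intro inf_mono) (simp_all add: h_eq diff_le_eq add.commute)
    also have "\<dots> = k + inf k g" by (simp add: add_inf_distrib_left)
    also have "\<dots> \<le> h - e" using ke h_eq by (simp add: algebra_simps)
    finally show ?thesis .
  qed
  then have "h \<le> h - e" using sup[of a0] unfolding is_sup_of_def by blast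
  with \<open>0 < e\<close> show False by simp
qed

lemma eventually_disj_iff_eventually_band_proj_le:
  fixes f :: "'i::preorder \<Rightarrow> 'a::vector_lattice"
  assumes ppp: "PPP TYPE('a)" and "0 < h"
  shows "(\<exists>e a0. 0 < e \<and> e \<le> h \<and> (\<forall>a. a0 \<le> a \<longrightarrow> pprt (f a - h) \<bottom>\<^sub>v e)) \<longleftrightarrow>
         (\<exists>e a0. e \<noteq> 0 \<and> component_of e h \<and> (\<forall>a. a0 \<le> a \<longrightarrow> band_proj e (f a) \<le> e))"
proof
  assume "\<exists>e a0. 0 < e \<and> e \<le> h \<and> (\<forall>a. a0 \<le> a \<longrightarrow> pprt (f a - h) \<bottom>\<^sub>v e)"
  then obtain e a0 where "0 < e" "e \<le> h" and e_disj: "\<forall>a. a0 \<le> a \<longrightarrow> pprt (f a - h) \<bottom>\<^sub>v e"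
    by blast
  define y where "y = band_proj e h"
  have y: "component_of y h" using component_of_band_proj[OF ppp] by (simp add: y_def)
  have "band_proj y (f a) \<le> y" if "a0 \<le> a" for a
  proof -
    have "y \<bottom>\<^sub>v pprt (f a - h)"
      using band_proj_decomp[OF ppp, of e h] e_disj that
      by (simp add: y_def mem_disj_compl_disj_compl_singleton)
    then show ?thesis by (simp add: band_proj_le_component_iff[OF ppp y] disj_sym)
  qed
  moreover have "y \<noteq> 0" using band_proj_ne_zero[OF ppp \<open>0 < e\<close> \<open>e \<le> h\<close>] by (simp add: y_def)
  ultimately show "\<exists>e a0. e \<noteq> 0 \<and> component_of e h \<and> (\<forall>a. a0 \<le> a \<longrightarrow> band_proj e (f a) \<le> e)"
    using y by blast
next
  assume "\<exists>e a0. e \<noteq> 0 \<and> component_of e h \<and> (\<forall>a. a0 \<le> a \<longrightarrow> band_proj e (f a) \<le> e)"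
  then obtain e a0 where "e \<noteq> 0" and e: "component_of e h"
    and "\<forall>a. a0 \<le> a \<longrightarrow> band_proj e (f a) \<le> e" by blast
  moreover have "0 \<le> e" "e \<le> h"
    using component_of_nonneg[OF _ e] component_of_le[OF _ e] \<open>0 < h\<close> by (simp_all add: less_imp_le)
  moreover have "0 < e" using \<open>e \<noteq> 0\<close> \<open>0 \<le> e\<close> by (simp add: order_less_le)
  ultimately show "\<exists>e a0. 0 < e \<and> e \<le> h \<and> (\<forall>a. a0 \<le> a \<longrightarrow> pprt (f a - h) \<bottom>\<^sub>v e)"
    using band_proj_le_component_iff[OF ppp e] by blast
qed

theorem theorem6p2:
  fixes f :: "'i::preorder \<Rightarrow> 'a::vector_lattice"
  assumes arch: "archimedean_vl TYPE('a)"
    and dir: "directed_index TYPE('i)"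
    and pos: "\<And>a. 0 \<le> f a"
  shows "(uo_conv f 0 \<longleftrightarrow>
            (\<forall>h. 0 \<le> h \<and> (\<forall>a0. is_sup_of h {inf h (f a) | a. a0 \<le> a}) \<longrightarrow> h = 0))
       \<and> (uo_conv f 0 \<longleftrightarrow>
            (\<forall>h. 0 < h \<longrightarrow> (\<exists>e a0. 0 < e \<and> e \<le> h \<and>
                  (\<forall>a. a0 \<le> a \<longrightarrow> pprt (f a - h) \<bottom>\<^sub>v e))))
       \<and> (PPP TYPE('a) \<longrightarrow>
            (uo_conv f 0 \<longleftrightarrow>
              (\<forall>h. 0 < h \<longrightarrow> (\<exists>e a0. e \<noteq> 0 \<and> component_of e h \<and>
                  (\<forall>a. a0 \<le> a \<longrightarrow> band_proj e (f a) \<le> e)))))"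
proof -
  have i_ii: "uo_conv f 0 \<longleftrightarrow>
      (\<forall>h. 0 \<le> h \<and> (\<forall>a0. is_sup_of h {inf h (f a) | a. a0 \<le> a}) \<longrightarrow> h = 0)"
    using uo_conv_zero_imp_tail_sup_zero[where f = f, OF pos]
      tail_sup_zero_imp_uo_conv_zero[where f = f, OF arch dir pos] by blast
  have i_iii: "uo_conv f 0 \<longleftrightarrow> (\<forall>h. 0 < h \<longrightarrow> (\<exists>e a0. 0 < e \<and> e \<le> h \<and>
      (\<forall>a. a0 \<le> a \<longrightarrow> pprt (f a - h) \<bottom>\<^sub>v e)))"
  proof
    assume "uo_conv f 0"
    then show "\<forall>h. 0 < h \<longrightarrow> (\<exists>e a0. 0 < e \<and> e \<le> h \<and> (\<forall>a. a0 \<le> a \<longrightarrow> pprt (f a - h) \<bottom>\<^sub>v e))"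
      using uo_conv_zero_imp_eventually_disj[where f = f, OF pos] by blast
  next
    assume "\<forall>h. 0 < h \<longrightarrow> (\<exists>e a0. 0 < e \<and> e \<le> h \<and> (\<forall>a. a0 \<le> a \<longrightarrow> pprt (f a - h) \<bottom>\<^sub>v e))"
    then show "uo_conv f 0"
      unfolding i_ii using eventually_disj_imp_tail_sup_zero[where f = f] by blast
  qed
  moreover have "uo_conv f 0 \<longleftrightarrow> (\<forall>h. 0 < h \<longrightarrow> (\<exists>e a0. e \<noteq> 0 \<and> component_of e h \<and>
      (\<forall>a. a0 \<le> a \<longrightarrow> band_proj e (f a) \<le> e)))" if "PPP TYPE('a)"
    unfolding i_iii
    by (simp only: eventually_disj_iff_eventually_band_proj_le[where f = f, OF that] cong: imp_cong)
  ultimately show ?thesis using i_ii by blast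
qed

end
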